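(* Let $(M,g,J)$ be a Kaehler manifold, $p\in M$, and let $\{v,w\}$ and $\{x,y\}$ be orthonormal pairs in $T_pM$, $\pi=\mathrm{span}\{v,w\}$. For $\varepsilon\in\mathbb{R}$ set $A=x\wedge_gy+Jx\wedge_gJy$, $v_\varepsilon=v+\varepsilon Av$, $w_\varepsilon=w+\varepsilon Aw$ and $\pi_\varepsilon=\mathrm{span}\{v_\varepsilon,w_\varepsilon\}$. Then, as $\varepsilon\to0$, $$K(p,\pi_\varepsilon)=K(p,\pi)+\varepsilon\,Q^c(g,R)(v,w,w,v;x,y)+O(\varepsilon^2).$$
   Context: A Kaehler manifold $(M,g,J)$: $J^2=-\mathrm{Id}$, $g(JX,JY)=g(X,Y)$, $\nabla J=0$. Curvature: $R(X,Y)Z=\nabla_X\nabla_YZ-\nabla_Y\nabla_XZ-\nabla_{[X,Y]}Z$, $R(X,Y,Z,W)=g(R(X,Y)Z,W)$; the sectional curvature of the plane spanned by linearly independent $a,b$ is $K(p,\mathrm{span}\{a,b\})=R(a,b,b,a)/(g(a,a)g(b,b)-g(a,b)^2)$. For vectors $X,Y$, $X\wedge_gY$ is the endomorphism $Z\mapsto g(Y,Z)X-g(X,Z)Y$, and $(X\wedge^c_gY)Z=(X\wedge_gY)Z+(JX\wedge_gJY)Z-2g(JX,Y)JZ$. For an endomorphism $B$, $(B\cdot R)(X_1,\dots,X_4)=-R(BX_1,X_2,X_3,X_4)-R(X_1,BX_2,X_3,X_4)-R(X_1,X_2,BX_3,X_4)-R(X_1,X_2,X_3,BX_4)$. The complex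 Tachibana tensor is $Q^c(g,R)(X_1,X_2,X_3,X_4;X,Y)=-((X\wedge^c_gY)\cdot R)(X_1,X_2,X_3,X_4)$. *)

theory Defs
  imports "HOL-Analysis.Analysis" "HOL-Library.Landau_Symbols"
begin

text \<open>Pointwise model: the tangent space T_pM is a finite-dimensional real inner
product space 'v (euclidean_space), g is its inner product, J is the complex
structure at p and R is the (0,4) curvature tensor R(X,Y,Z,W) = g(R(X,Y)Z,W) at p.\<close>

definition hermitian_cs :: "('v::euclidean_space \<Rightarrow> 'v) \<Rightarrow> bool" where
  "hermitian_cs J \<longleftrightarrow> linear J \<and> (\<forall>X. J (J X) = - X) \<and> (\<forall>X Y. inner (J X) (J Y) = inner X Y)"

text \<open>Algebraic properties of the curvature tensor of a Kaehler manifold at a point: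
multilinearity, the standard symmetries, first Bianchi identity, and the Kaehler
identity coming from nabla J = 0 (R(X,Y) commutes with J).\<close>
definition kaehler_curvature ::
  "('v::euclidean_space \<Rightarrow> 'v) \<Rightarrow> ('v \<Rightarrow> 'v \<Rightarrow> 'v \<Rightarrow> 'v \<Rightarrow> real) \<Rightarrow> bool" where
  "kaehler_curvature J R \<longleftrightarrow>
     (\<forall>Y Z W. linear (\<lambda>X. R X Y Z W)) \<and>
     (\<forall>X Z W. linear (\<lambda>Y. R X Y Z W)) \<and>
     (\<forall>X Y W. linear (\<lambda>Z. R X Y Z W)) \<and>
     (\<forall>X Y Z. linear (\<lambda>W. R X Y Z W)) \<and>
     (\<forall>X Y Z W. R X Y Z W = - R Y X Z W) \<and>
     (\<forall>X Y Z W. R X Y Z W = - R X Y W Z) \<and>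
     (\<forall>X Y Z W. R X Y Z W + R Y Z X W + R Z X Y W = 0) \<and>
     (\<forall>X Y Z W. R X Y (J Z) (J W) = R X Y Z W)"

definition wedge :: "'v::real_inner \<Rightarrow> 'v \<Rightarrow> 'v \<Rightarrow> 'v" where
  "wedge X Y Z = inner Y Z *\<^sub>R X - inner X Z *\<^sub>R Y"

definition cwedge :: "('v::real_inner \<Rightarrow> 'v) \<Rightarrow> 'v \<Rightarrow> 'v \<Rightarrow> 'v \<Rightarrow> 'v" where
  "cwedge J X Y Z = wedge X Y Z + wedge (J X) (J Y) Z - (2 * inner (J X) Y) *\<^sub>R J Z"

definition endo_act :: "('v \<Rightarrow> 'v) \<Rightarrow> ('v \<Rightarrow> 'v \<Rightarrow> 'v \<Rightarrow> 'v \<Rightarrow> real) \<Rightarrow> 'v \<Rightarrow> 'v \<Rightarrow> 'v \<Rightarrow> 'v \<Rightarrow> real" where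
  "endo_act B R X1 X2 X3 X4 =
     - R (B X1) X2 X3 X4 - R X1 (B X2) X3 X4 - R X1 X2 (B X3) X4 - R X1 X2 X3 (B X4)"

definition tachibana_c ::
  "('v::real_inner \<Rightarrow> 'v) \<Rightarrow> ('v \<Rightarrow> 'v \<Rightarrow> 'v \<Rightarrow> 'v \<Rightarrow> real) \<Rightarrow> 'v \<Rightarrow> 'v \<Rightarrow> 'v \<Rightarrow> 'v \<Rightarrow> 'v \<Rightarrow> 'v \<Rightarrow> real" where
  "tachibana_c J R X1 X2 X3 X4 X Y = - endo_act (cwedge J X Y) R X1 X2 X3 X4"

definition sec_curv :: "('v::real_inner \<Rightarrow> 'v \<Rightarrow> 'v \<Rightarrow> 'v \<Rightarrow> real) \<Rightarrow> 'v \<Rightarrow> 'v \<Rightarrow> real" where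
  "sec_curv R a b = R a b b a / (inner a a * inner b b - (inner a b)\<^sup>2)"

end

theory Submission
  imports Defs
begin

text \<open>The endomorphism A = wedge x y + wedge (J x) (J y) is skew-adjoint, so moving the orthonormal pair
(v, w) along it changes the Gram determinant only at order \<epsilon>^2; to first order only the
numerator R(v\<epsilon>, w\<epsilon>, w\<epsilon>, v\<epsilon>) varies, with coefficient -(A\<cdot>R)(v,w,w,v). On a Kaehler
manifold J\<cdot>R = 0, so the extra term -2g(Jx,y)J of the complex wedge does not change the
action on R, and this coefficient is exactly Q^c(g,R)(v,w,w,v;x,y).\<close>

lemma bigo_quotient_second_order:
  fixes P Q :: "real \<Rightarrow> real"
  assumes "isCont P 0" "isCont Q 0"
  shows "(\<lambda>e. (n0 + e * n1 + e\<^sup>2 * P e) / (1 + e\<^sup>2 * Q e) - n0 - e * n1) \<in> O[at 0](\<lambda>e. e\<^sup>2)"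
proof (rule bigoI_tendsto)
  let ?D = "\<lambda>e. 1 + e\<^sup>2 * Q e"
  let ?h = "\<lambda>e. (P e - (n0 + e * n1) * Q e) / ?D e"
  have "isCont ?h 0"
    using assms by (intro continuous_intros) auto
  then have lim: "(?h \<longlongrightarrow> ?h 0) (at 0)"
    by (simp add: isCont_def)
  have "eventually (\<lambda>e. ?D e \<noteq> 0) (at 0)"
    using assms(2) by (intro tendsto_imp_eventually_ne[where c = 1]) (auto intro!: tendsto_eq_intros simp: isCont_def)
  moreover have "eventually (\<lambda>e::real. e \<noteq> 0) (at 0)"
    by (simp add: eventually_at_filter)
  ultimately have "eventually (\<lambda>e. ?h e = ((n0 + e * n1 + e\<^sup>2 * P e) / ?D e - n0 - e * n1) / e\<^sup>2) (at 0)"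
  proof eventually_elim
    case (elim e)
    let ?N = "n0 + e * n1 + e\<^sup>2 * P e" and ?c = "n0 + e * n1"
    have "?N / ?D e - ?c = (?N - ?c * ?D e) / ?D e"
      using elim by (simp add: diff_divide_distrib)
    also have "?N - ?c * ?D e = e\<^sup>2 * (P e - ?c * Q e)"
      by (simp add: algebra_simps)
    finally show ?case
      using elim by (simp add: diff_diff_eq)
  qed
  with lim show "((\<lambda>e. ((n0 + e * n1 + e\<^sup>2 * P e) / ?D e - n0 - e * n1) / e\<^sup>2) \<longlongrightarrow> ?h 0) (at 0)"
    by (rule Lim_transform_eventually)
  show "eventually (\<lambda>e::real. e\<^sup>2 \<noteq> 0) (at 0)"
    by (simp add: eventually_at_filter)
qed

definition quadrilinear :: "('v::real_vector \<Rightarrow> 'v \<Rightarrow> 'v \<Rightarrow> 'v \<Rightarrow> real) \<Rightarrow> bool" where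
  "quadrilinear R \<longleftrightarrow>
     (\<forall>Y Z W. linear (\<lambda>X. R X Y Z W)) \<and> (\<forall>X Z W. linear (\<lambda>Y. R X Y Z W)) \<and>
     (\<forall>X Y W. linear (\<lambda>Z. R X Y Z W)) \<and> (\<forall>X Y Z. linear (\<lambda>W. R X Y Z W))"

lemma quadrilinear_linear:
  assumes "quadrilinear R"
  shows "linear (\<lambda>X. R X Y Z W)" "linear (\<lambda>Y. R X Y Z W)"
    and "linear (\<lambda>Z. R X Y Z W)" "linear (\<lambda>W. R X Y Z W)"
  using assms unfolding quadrilinear_def by blast+

lemma quadrilinear_add:
  assumes "quadrilinear R"
  shows "R (X + X') Y Z W = R X Y Z W + R X' Y Z W"
    and "R X (Y + Y') Z W = R X Y Z W + R X Y' Z W"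
    and "R X Y (Z + Z') W = R X Y Z W + R X Y Z' W"
    and "R X Y Z (W + W') = R X Y Z W + R X Y Z W'"
  using linear_add[OF quadrilinear_linear(1)[OF assms]] linear_add[OF quadrilinear_linear(2)[OF assms]]
    linear_add[OF quadrilinear_linear(3)[OF assms]] linear_add[OF quadrilinear_linear(4)[OF assms]] by simp_all

lemma quadrilinear_diff:
  assumes "quadrilinear R"
  shows "R (X - X') Y Z W = R X Y Z W - R X' Y Z W"
    and "R X (Y - Y') Z W = R X Y Z W - R X Y' Z W"
    and "R X Y (Z - Z') W = R X Y Z W - R X Y Z' W"
    and "R X Y Z (W - W') = R X Y Z W - R X Y Z W'"
  using linear_diff[OF quadrilinear_linear(1)[OF assms]] linear_diff[OF quadrilinear_linear(2)[OF assms]]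
    linear_diff[OF quadrilinear_linear(3)[OF assms]] linear_diff[OF quadrilinear_linear(4)[OF assms]] by simp_all

lemma quadrilinear_scaleR:
  assumes "quadrilinear R"
  shows "R (c *\<^sub>R X) Y Z W = c * R X Y Z W"
    and "R X (c *\<^sub>R Y) Z W = c * R X Y Z W"
    and "R X Y (c *\<^sub>R Z) W = c * R X Y Z W"
    and "R X Y Z (c *\<^sub>R W) = c * R X Y Z W"
  using linear_scale[OF quadrilinear_linear(1)[OF assms]] linear_scale[OF quadrilinear_linear(2)[OF assms]]
    linear_scale[OF quadrilinear_linear(3)[OF assms]] linear_scale[OF quadrilinear_linear(4)[OF assms]] by simp_all

lemma quadrilinear_uminus:
  assumes "quadrilinear R"
  shows "R (- X) Y Z W = - R X Y Z W" and "R X (- Y) Z W = - R X Y Z W"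
    and "R X Y (- Z) W = - R X Y Z W" and "R X Y Z (- W) = - R X Y Z W"
  using linear_neg[OF quadrilinear_linear(1)[OF assms]] linear_neg[OF quadrilinear_linear(2)[OF assms]]
    linear_neg[OF quadrilinear_linear(3)[OF assms]] linear_neg[OF quadrilinear_linear(4)[OF assms]] by simp_all

lemma kaehler_curvature_imp_quadrilinear:
  "kaehler_curvature J R \<Longrightarrow> quadrilinear R"
  unfolding kaehler_curvature_def quadrilinear_def by (elim conjE) (intro conjI; assumption)

lemma curvature_pair_symmetric:
  fixes R :: "'v \<Rightarrow> 'v \<Rightarrow> 'v \<Rightarrow> 'v \<Rightarrow> real"
  assumes skew12: "\<And>X Y Z W. R X Y Z W = - R Y X Z W"
    and skew34: "\<And>X Y Z W. R X Y Z W = - R X Y W Z"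
    and bianchi: "\<And>X Y Z W. R X Y Z W + R Y Z X W + R Z X Y W = 0"
  shows "R X Y Z W = R Z W X Y"
proof -
  have "R X Y Z W + R Y Z X W + R Z X Y W = 0"
    and "R Y Z W X + R Z W Y X + R W Y Z X = 0"
    and "R Z W X Y + R W X Z Y + R X Z W Y = 0"
    and "R W X Y Z + R X Y W Z + R Y W X Z = 0"
    by (rule bianchi)+
  moreover have "R Y Z W X = - R Y Z X W" "R Z W Y X = - R Z W X Y"
    "R W X Z Y = - R W X Y Z" "R X Y W Z = - R X Y Z W"
    by (rule skew34)+
  moreover have "R W Y Z X = R Y W X Z" "R X Z W Y = R Z X Y W"
    by (metis skew12 skew34)+
  ultimately show ?thesis
    by linarith
qed

lemma kaehler_endo_act_J:
  assumes "hermitian_cs J" "kaehler_curvature J R"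
  shows "endo_act J R X1 X2 X3 X4 = 0"
proof -
  have JJ: "\<And>X. J (J X) = - X"
    using assms(1) by (simp add: hermitian_cs_def)
  have R: "quadrilinear R"
    using assms(2) by (rule kaehler_curvature_imp_quadrilinear)
  have skew12: "\<And>X Y Z W. R X Y Z W = - R Y X Z W"
    and skew34: "\<And>X Y Z W. R X Y Z W = - R X Y W Z"
    and bianchi: "\<And>X Y Z W. R X Y Z W + R Y Z X W + R Z X Y W = 0"
    and RJ: "\<And>X Y Z W. R X Y (J Z) (J W) = R X Y Z W"
    using assms(2) unfolding kaehler_curvature_def by blast+
  have pair: "\<And>X Y Z W. R X Y Z W = R Z W X Y"
    using skew12 skew34 bianchi by (rule curvature_pair_symmetric)
  have J34: "R X Y (J Z) W = - R X Y Z (J W)" for X Y Z W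
    using RJ[of X Y Z "J W"] by (simp add: JJ quadrilinear_uminus[OF R])
  have J12: "R (J X) Y Z W = - R X (J Y) Z W" for X Y Z W
    by (metis J34 pair)
  show ?thesis
    unfolding endo_act_def using J12[of X1 X2 X3 X4] J34[of X1 X2 X3 X4] by simp
qed

lemma endo_act_diff_scaleR:
  assumes "quadrilinear R"
  shows "endo_act (\<lambda>Z. B Z - c *\<^sub>R C Z) R X1 X2 X3 X4
       = endo_act B R X1 X2 X3 X4 - c * endo_act C R X1 X2 X3 X4"
  unfolding endo_act_def
  by (simp add: quadrilinear_diff[OF assms] quadrilinear_scaleR[OF assms] algebra_simps)

lemma tachibana_c_kaehler:
  assumes "hermitian_cs J" "kaehler_curvature J R"
  shows "tachibana_c J R X1 X2 X3 X4 X Y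
       = - endo_act (\<lambda>Z. wedge X Y Z + wedge (J X) (J Y) Z) R X1 X2 X3 X4"
proof -
  have "cwedge J X Y = (\<lambda>Z. (wedge X Y Z + wedge (J X) (J Y) Z) - (2 * inner (J X) Y) *\<^sub>R J Z)"
    by (simp add: cwedge_def fun_eq_iff)
  then show ?thesis
    unfolding tachibana_c_def
    using endo_act_diff_scaleR[OF kaehler_curvature_imp_quadrilinear[OF assms(2)]]
      kaehler_endo_act_J[OF assms] by simp
qed

lemma inner_wedge_skew: "inner (wedge X Y Z) U = - inner Z (wedge X Y U)"
  by (simp add: wedge_def inner_diff_left inner_diff_right inner_commute)

lemma sec_curv_skew_variation:
  fixes R :: "'v::real_inner \<Rightarrow> 'v \<Rightarrow> 'v \<Rightarrow> 'v \<Rightarrow> real"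
  assumes R: "quadrilinear R"
    and skew: "\<And>X Y. inner (B X) Y = - inner X (B Y)"
    and "inner v v = 1" "inner w w = 1" "inner v w = 0"
  shows "(\<lambda>e. sec_curv R (v + e *\<^sub>R B v) (w + e *\<^sub>R B w) - sec_curv R v w
              + e * endo_act B R v w w v) \<in> O[at 0](\<lambda>e. e\<^sup>2)"
proof -
  define a b where "a = B v" and "b = B w"
  have va: "inner v a = 0" and wb: "inner w b = 0" and vb: "inner v b + inner a w = 0"
    using skew[of v v] skew[of w w] skew[of v w] by (simp_all add: a_def b_def inner_commute)
  define n0 n1 where "n0 = R v w w v"
    and "n1 = R a w w v + R v b w v + R v w b v + R v w w a"
  define P where "P e = R a b w v + R a w b v + R a w w a + R v b b v + R v b w a + R v w b a
    + e * (R a b b v + R a b w a + R a w b a + R v b b a) + e\<^sup>2 * R a b b a" for e :: real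
  define Q where "Q e = inner a a + inner b b + e\<^sup>2 * (inner a a * inner b b - (inner a b)\<^sup>2)"
    for e :: real
  have num: "R (v + e *\<^sub>R a) (w + e *\<^sub>R b) (w + e *\<^sub>R b) (v + e *\<^sub>R a) = n0 + e * n1 + e\<^sup>2 * P e"
    for e
    unfolding n0_def n1_def P_def
    by (simp add: quadrilinear_add[OF R] quadrilinear_scaleR[OF R] algebra_simps power2_eq_square)
  have den: "inner (v + e *\<^sub>R a) (v + e *\<^sub>R a) * inner (w + e *\<^sub>R b) (w + e *\<^sub>R b)
      - (inner (v + e *\<^sub>R a) (w + e *\<^sub>R b))\<^sup>2 = 1 + e\<^sup>2 * Q e" for e
  proof -
    have vv: "inner (v + e *\<^sub>R a) (v + e *\<^sub>R a) = 1 + e\<^sup>2 * inner a a"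
      and ww: "inner (w + e *\<^sub>R b) (w + e *\<^sub>R b) = 1 + e\<^sup>2 * inner b b"
      and vw: "inner (v + e *\<^sub>R a) (w + e *\<^sub>R b) = e\<^sup>2 * inner a b"
      using assms(3-5) va wb vb inner_commute[of a v] inner_commute[of b w] inner_commute[of a w]
      by (simp_all add: inner_add_left inner_add_right power2_eq_square distrib_left[symmetric])
    show ?thesis
      unfolding vv ww vw Q_def by (simp add: algebra_simps power2_eq_square)
  qed
  have "isCont P 0" "isCont Q 0"
    unfolding P_def[abs_def] Q_def[abs_def] by (intro continuous_intros)+
  then have "(\<lambda>e. (n0 + e * n1 + e\<^sup>2 * P e) / (1 + e\<^sup>2 * Q e) - n0 - e * n1) \<in> O[at 0](\<lambda>e. e\<^sup>2)"
    by (rule bigo_quotient_second_order)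
  moreover have "sec_curv R v w = n0"
    using assms(3-5) by (simp add: sec_curv_def n0_def)
  moreover have "endo_act B R v w w v = - n1"
    by (simp add: endo_act_def n1_def a_def b_def)
  ultimately show ?thesis
    by (simp add: sec_curv_def num den a_def[symmetric] b_def[symmetric])
qed

theorem mainTheorem6:
  fixes J :: "'v::euclidean_space \<Rightarrow> 'v"
    and R :: "'v \<Rightarrow> 'v \<Rightarrow> 'v \<Rightarrow> 'v \<Rightarrow> real"
    and v w x y :: 'v
  assumes "hermitian_cs J"
    and "kaehler_curvature J R"
    and "inner v v = 1" "inner w w = 1" "inner v w = 0"
    and "inner x x = 1" "inner y y = 1" "inner x y = 0"
  shows "(\<lambda>\<epsilon>::real.
            let A = (\<lambda>Z. wedge x y Z + wedge (J x) (J y) Z);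
                v\<epsilon> = v + \<epsilon> *\<^sub>R A v;
                w\<epsilon> = w + \<epsilon> *\<^sub>R A w
            in sec_curv R v\<epsilon> w\<epsilon> - sec_curv R v w - \<epsilon> * tachibana_c J R v w w v x y)
         \<in> O[at 0](\<lambda>\<epsilon>. \<epsilon>\<^sup>2)"
proof -
  define A where "A Z = wedge x y Z + wedge (J x) (J y) Z" for Z
  have "inner (A X) Y = - inner X (A Y)" for X Y
    unfolding A_def by (simp add: inner_add_left inner_add_right inner_wedge_skew)
  then have "(\<lambda>e. sec_curv R (v + e *\<^sub>R A v) (w + e *\<^sub>R A w) - sec_curv R v w
              + e * endo_act A R v w w v) \<in> O[at 0](\<lambda>e. e\<^sup>2)"
    using assms(3-5) kaehler_curvature_imp_quadrilinear[OF assms(2)]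
    by (intro sec_curv_skew_variation)
  moreover have "tachibana_c J R v w w v x y = - endo_act A R v w w v"
    unfolding A_def[abs_def] by (rule tachibana_c_kaehler[OF assms(1,2)])
  ultimately show ?thesis
    by (simp add: A_def[abs_def] Let_def)
qed

end
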